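(* Consider an asynchronous execution of the Arrow protocol for a request set $R$ on a tree $T$, with requests indexed $r_0,r_1,\dots,r_{|R|-1}$ in the resulting queueing order. Let $i\in[1,|R|-1]$ and let $(u_0,u_1,\dots,u_s)$ be the tree path from $u_0=v_i$ (node of $r_i$) to $u_s=v_{i-1}$ (node of its predecessor $r_{i-1}$). Then for every node $u_k$ on this path, among the "find predecessor" messages of all requests $r_j$ with $j\in[i,|R|-1]$, the message of $r_i$ is the first one that reaches node $u_k$ (or is generated at $u_k$).
   Context: Requests $r=(v,t)$ are issued at node $v$ at time $t\ge0$; $r_0=(v_0,0)$ is a dummy request. Arrow protocol on a weighted tree $T$: each node $u$ stores a pointer $\mathrm{link}(u)$ (itself or a neighbour), initially pointing towards $v_0$ with $\mathrm{link}(v_0)=v_0$. When $r$ is issued at $v$: if $\mathrm{link}(v)=v$, $r$ is queued behind the previous request at $v$; otherwise atomically the "find predecessor" message $\mathrm{find}(r)$ is sent to $\mathrm{link}(v)$ and $\mathrm{link}(v):=v$. When $u$ receives $\mathrm{find}(r)$ from neighbour $w$: if $\mathrm{link}(u)=u$, atomically $r$ is queued directly behind the last request issued at $u$ and $\mathrm{link}(u):=w$; otherwise atomically $\mathrm{find}(r)$ is forwarded to $\mathrm{link}(u)$ and $\mathrm{link}(u):=w$. In an asynchronous execution message delays are arbitrary, each delay over edge $e$ being at most the weight of $e$. *)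

theory Defs
  imports Main "HOL.Real"
begin

definition spath :: "'v set \<Rightarrow> ('v \<Rightarrow> 'v \<Rightarrow> bool) \<Rightarrow> 'v list \<Rightarrow> 'v \<Rightarrow> 'v \<Rightarrow> bool" where
  "spath V E p u v \<longleftrightarrow> p \<noteq> [] \<and> hd p = u \<and> last p = v \<and> distinct p \<and> set p \<subseteq> V \<and>
     (\<forall>k. Suc k < length p \<longrightarrow> E (p ! k) (p ! Suc k))"

definition is_tree :: "'v set \<Rightarrow> ('v \<Rightarrow> 'v \<Rightarrow> bool) \<Rightarrow> bool" where
  "is_tree V E \<longleftrightarrow> finite V \<and> V \<noteq> {} \<and>
     (\<forall>u v. E u v \<longrightarrow> u \<in> V \<and> v \<in> V \<and> u \<noteq> v \<and> E v u) \<and>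
     (\<forall>u\<in>V. \<forall>v\<in>V. \<exists>!p. spath V E p u v)"

definition is_weight :: "('v \<Rightarrow> 'v \<Rightarrow> bool) \<Rightarrow> ('v \<Rightarrow> 'v \<Rightarrow> real) \<Rightarrow> bool" where
  "is_weight E wt \<longleftrightarrow> (\<forall>u v. E u v \<longrightarrow> wt u v > 0 \<and> wt u v = wt v u)"

definition init_links :: "'v set \<Rightarrow> ('v \<Rightarrow> 'v \<Rightarrow> bool) \<Rightarrow> 'v \<Rightarrow> ('v \<Rightarrow> 'v) \<Rightarrow> bool" where
  "init_links V E v0 l \<longleftrightarrow> l v0 = v0 \<and>
     (\<forall>u\<in>V - {v0}. \<exists>p. spath V E p u v0 \<and> l u = p ! 1)"

text \<open>Events: issuing request r (at its node), and node u receiving find(r) from neighbour w.\<close>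
datatype ('r, 'v) event = Issue 'r | Recv 'r 'v 'v

text \<open>Global state: link pointers, last request issued at each node, predecessor of each
  request in the queue, and the in-flight find message of each request
  (sender, receiver, sending time).\<close>
record ('v, 'r) st =
  lnk :: "'v \<Rightarrow> 'v"
  lst :: "'v \<Rightarrow> 'r option"
  prd :: "'r \<Rightarrow> 'r option"
  msgs :: "'r \<Rightarrow> ('v \<times> 'v \<times> real) option"

text \<open>One atomic step at time t (None if the step is not enabled).
  nd r / tm r are the node / issue time of request r, wt the edge weights (delay bounds).\<close>
fun step :: "('v \<Rightarrow> 'v \<Rightarrow> real) \<Rightarrow> ('r \<Rightarrow> 'v) \<Rightarrow> ('r \<Rightarrow> real) \<Rightarrow> ('v, 'r) st
              \<Rightarrow> ('r, 'v) event \<times> real \<Rightarrow> ('v, 'r) st option" where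
  "step wt nd tm s (Issue r, t) =
     (if t \<noteq> tm r then None
      else let v = nd r in
        if lnk s v = v then
          Some (s\<lparr>prd := (prd s)(r := lst s v), lst := (lst s)(v := Some r)\<rparr>)
        else
          Some (s\<lparr>msgs := (msgs s)(r := Some (v, lnk s v, t)),
                  lnk := (lnk s)(v := v), lst := (lst s)(v := Some r)\<rparr>))"
| "step wt nd tm s (Recv r w u, t) =
     (case msgs s r of
        None \<Rightarrow> None
      | Some (w', u', t0) \<Rightarrow>
          if w' \<noteq> w \<or> u' \<noteq> u \<or> t < t0 \<or> t > t0 + wt w u then None
          else if lnk s u = u then
            Some (s\<lparr>prd := (prd s)(r := lst s u), lnk := (lnk s)(u := w),
                    msgs := (msgs s)(r := None)\<rparr>)
          else
            Some (s\<lparr>msgs := (msgs s)(r := Some (u, lnk s u, t)), lnk := (lnk s)(u := w)\<rparr>))"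

fun run :: "('v \<Rightarrow> 'v \<Rightarrow> real) \<Rightarrow> ('r \<Rightarrow> 'v) \<Rightarrow> ('r \<Rightarrow> real) \<Rightarrow> ('v, 'r) st
             \<Rightarrow> (('r, 'v) event \<times> real) list \<Rightarrow> ('v, 'r) st option" where
  "run wt nd tm s [] = Some s"
| "run wt nd tm s (e # es) =
     (case step wt nd tm s e of None \<Rightarrow> None | Some s' \<Rightarrow> run wt nd tm s' es)"

definition init_state :: "('v \<Rightarrow> 'v) \<Rightarrow> 'v \<Rightarrow> 'r \<Rightarrow> ('v, 'r) st" where
  "init_state l v0 r0 = \<lparr>lnk = l, lst = (\<lambda>_. None)(v0 := Some r0),
                         prd = (\<lambda>_. None), msgs = (\<lambda>_. None)\<rparr>"

text \<open>A complete asynchronous execution (timed trace) of Arrow for request set R with dummy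
  request r0 at v0; sf is the final state (all messages delivered).\<close>
definition arrow_exec ::
  "'v set \<Rightarrow> ('v \<Rightarrow> 'v \<Rightarrow> bool) \<Rightarrow> ('v \<Rightarrow> 'v \<Rightarrow> real) \<Rightarrow> 'v \<Rightarrow> ('v \<Rightarrow> 'v) \<Rightarrow>
   'r set \<Rightarrow> 'r \<Rightarrow> ('r \<Rightarrow> 'v) \<Rightarrow> ('r \<Rightarrow> real) \<Rightarrow>
   (('r, 'v) event \<times> real) list \<Rightarrow> ('v, 'r) st \<Rightarrow> bool" where
  "arrow_exec V E wt v0 l R r0 nd tm tr sf \<longleftrightarrow>
     is_tree V E \<and> is_weight E wt \<and> v0 \<in> V \<and> init_links V E v0 l \<and>
     finite R \<and> r0 \<in> R \<and> nd r0 = v0 \<and> tm r0 = 0 \<and>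
     (\<forall>r\<in>R. nd r \<in> V \<and> tm r \<ge> 0) \<and>
     sorted (map snd tr) \<and> (\<forall>x\<in>set tr. snd x \<ge> 0) \<and>
     (\<forall>r. (\<exists>x\<in>set tr. fst x = Issue r) \<longrightarrow> r \<in> R - {r0}) \<and>
     (\<forall>r\<in>R - {r0}. card {k. k < length tr \<and> fst (tr ! k) = Issue r} = 1) \<and>
     run wt nd tm (init_state l v0 r0) tr = Some sf \<and>
     msgs sf = (\<lambda>_. None)"

fun visits :: "('r \<Rightarrow> 'v) \<Rightarrow> ('r, 'v) event \<Rightarrow> 'r \<Rightarrow> 'v \<Rightarrow> bool" where
  "visits nd (Issue r') r u \<longleftrightarrow> r' = r \<and> nd r = u"
| "visits nd (Recv r' w u') r u \<longleftrightarrow> r' = r \<and> u' = u"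

end

theory Submission
  imports Defs
begin

text \<open>
  Call the last visitor of a node x after n events the request whose find message was most recently
  generated at or received by x. Every visit is made by a request that comes later in the queue than
  the current last visitor of the node, so the visitors of any fixed node appear in queue order. This
  is proved by strong induction on the queue position c of the visiting request: the capped potential
  min (qpos (last visitor)) c only grows over time, does not decrease along link pointers, and at the
  sender of a find message of r it is at least min (qpos r) c. Following the message of the request
  at position c until it is queued behind its predecessor, at position c - 1, shows that the
  potential is below c at every node the request visits.

  The find message of r_i travels along a non-backtracking walk from v_i to v_(i-1). In a tree this
  walk is the unique path, so r_i visits every u_k, and a later request r_j visiting u_k before r_i
  would break the queue order of the visitors of u_k.
\<close>

section \<open>Non-backtracking walks in trees\<close>

lemma spath_iff_successively:
  "spath V E p u v \<longleftrightarrow>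
     p \<noteq> [] \<and> hd p = u \<and> last p = v \<and> distinct p \<and> set p \<subseteq> V \<and> successively E p"
  unfolding spath_def successively_conv_nth ..

fun no_backtrack :: "'a list \<Rightarrow> bool" where
  "no_backtrack (a # b # c # xs) \<longleftrightarrow> a \<noteq> c \<and> no_backtrack (b # c # xs)"
| "no_backtrack _ \<longleftrightarrow> True"

lemma no_backtrack_Cons: "no_backtrack (a # xs) \<Longrightarrow> no_backtrack xs"
  by (induction xs rule: no_backtrack.induct) auto

lemma tree_edge: "is_tree V E \<Longrightarrow> E u v \<Longrightarrow> u \<in> V \<and> v \<in> V \<and> u \<noteq> v \<and> E v u"
  unfolding is_tree_def by blast

lemma tree_spath_unique:
  "is_tree V E \<Longrightarrow> spath V E p u v \<Longrightarrow> spath V E q u v \<Longrightarrow> p = q"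
  unfolding is_tree_def spath_def by (metis hd_in_set last_in_set subsetD)

lemma successively_edges_in_V:
  assumes "is_tree V E" "successively E xs" "xs \<noteq> []" "hd xs \<in> V"
  shows "set xs \<subseteq> V"
  using assms(2-4)
proof (induction xs)
  case (Cons x xs)
  then show ?case using tree_edge[OF assms(1)] by (cases xs) auto
qed simp

lemma tree_no_backtrack_walk_distinct:
  assumes tree: "is_tree V E" and "successively E xs" "no_backtrack xs"
  shows "distinct xs"
  using assms(2,3)
proof (induction xs)
  case (Cons a xs)
  have walk: "successively E xs" and nb: "no_backtrack xs"
    using Cons.prems no_backtrack_Cons by (auto simp: successively_Cons)
  with Cons.IH have dist: "distinct xs" by blast
  show ?case
  proof (cases xs)
    case (Cons b ys)
    have ab: "E a b" using Cons.prems(1) Cons by simp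
    have "a \<notin> set xs"
    proof
      assume "a \<in> set xs"
      then obtain s where s: "s < length xs" "xs ! s = a" by (metis in_set_conv_nth)
      have "set xs \<subseteq> V" using successively_edges_in_V[OF tree walk] tree_edge[OF tree ab] Cons by simp
      moreover have "successively E (take (Suc s) xs)"
        using walk successively_append_iff[of E "take (Suc s) xs" "drop (Suc s) xs"] by simp
      moreover have "last (take (Suc s) xs) = a" using s by (simp add: take_Suc_conv_app_nth)
      ultimately have "spath V E (take (Suc s) xs) b a"
        using dist Cons set_take_subset[of "Suc s" xs]
        by (auto simp add: spath_iff_successively simp del: take_Suc_Cons)
      moreover have "spath V E [b, a] b a"
        using tree_edge[OF tree ab] by (auto simp add: spath_iff_successively)
      ultimately have "take (Suc s) xs = [b, a]" by (rule tree_spath_unique[OF tree])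
      then have "ys \<noteq> [] \<and> hd ys = a" using Cons by (cases s; cases ys) auto
      then show False using Cons.prems(2) Cons by (cases ys) auto
    qed
    with dist show ?thesis by simp
  qed simp
qed simp

lemma tree_no_backtrack_walk_spath:
  assumes "is_tree V E" "successively E xs" "no_backtrack xs" "xs \<noteq> []" "hd xs \<in> V"
  shows "spath V E xs (hd xs) (last xs)"
  using assms successively_edges_in_V[of V E xs] tree_no_backtrack_walk_distinct[of V E xs]
  by (simp add: spath_iff_successively)

lemma spath_ConsE:
  assumes "spath V E p u v" "u \<noteq> v"
  obtains p' where "p = u # p'" "p ! 1 = hd p'" "spath V E p' (hd p') v" "E u (hd p')"
proof -
  obtain p' where p: "p = u # p'" using assms(1) unfolding spath_def by (cases p) auto
  then have "p' \<noteq> []" using assms unfolding spath_def by auto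
  then show ?thesis
    using that[OF p] assms(1) p by (auto simp: spath_iff_successively successively_Cons hd_conv_nth)
qed

lemma init_links_edge:
  assumes tree: "is_tree V E" and links: "init_links V E v0 l" and "x \<in> V" "x \<noteq> v0"
  shows "E x (l x) \<and> l (l x) \<noteq> x"
proof -
  obtain p where p: "spath V E p x v0" "l x = p ! 1" using assms unfolding init_links_def by blast
  then obtain p' where p': "p = x # p'" "l x = hd p'" "spath V E p' (l x) v0" "E x (l x)"
    using spath_ConsE[OF p(1) \<open>x \<noteq> v0\<close>] by metis
  have "x \<notin> set p'" using p(1) p'(1) unfolding spath_def by simp
  have "l (l x) \<noteq> x"
  proof (cases "l x = v0")
    case False
    have "l x \<in> V" using tree_edge[OF tree p'(4)] by blast
    then obtain q where q: "spath V E q (l x) v0" "l (l x) = q ! 1"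
      using links False unfolding init_links_def by blast
    then have "q = p'" using tree_spath_unique[OF tree _ p'(3)] by blast
    obtain p'' where "p' = l x # p''" "p' ! 1 = hd p''" "spath V E p'' (hd p'') v0"
      using spath_ConsE[OF p'(3) False] by blast
    then have "l (l x) \<in> set p'"
      using q(2) \<open>q = p'\<close> unfolding spath_def by (metis hd_in_set list.set_intros(2))
    with \<open>x \<notin> set p'\<close> show ?thesis by auto
  qed (use links \<open>x \<noteq> v0\<close> in \<open>simp add: init_links_def\<close>)
  with p'(4) show ?thesis by blast
qed

section \<open>Executions of the Arrow protocol\<close>

lemma run_append:
  "run wt nd tm s (xs @ ys) =
     (case run wt nd tm s xs of None \<Rightarrow> None | Some s' \<Rightarrow> run wt nd tm s' ys)"
  by (induction xs arbitrary: s) (auto split: option.split)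

lemma step_SomeE:
  assumes "step wt nd tm s (e, t) = Some s'"
  obtains (issue_sink) g where "e = Issue g" "lnk s (nd g) = nd g"
      "s' = s\<lparr>prd := (prd s)(g := lst s (nd g)), lst := (lst s)(nd g := Some g)\<rparr>"
  | (issue_send) g where "e = Issue g" "lnk s (nd g) \<noteq> nd g"
      "s' = s\<lparr>msgs := (msgs s)(g := Some (nd g, lnk s (nd g), t)),
              lnk := (lnk s)(nd g := nd g), lst := (lst s)(nd g := Some g)\<rparr>"
  | (recv_sink) g w u t0 where "e = Recv g w u" "msgs s g = Some (w, u, t0)" "lnk s u = u"
      "s' = s\<lparr>prd := (prd s)(g := lst s u), lnk := (lnk s)(u := w), msgs := (msgs s)(g := None)\<rparr>"
  | (recv_forward) g w u t0 where "e = Recv g w u" "msgs s g = Some (w, u, t0)" "lnk s u \<noteq> u"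
      "s' = s\<lparr>msgs := (msgs s)(g := Some (u, lnk s u, t)), lnk := (lnk s)(u := w)\<rparr>"
  using assms by (cases e) (auto simp: Let_def split: if_splits option.splits)

fun ev_req :: "('r, 'v) event \<Rightarrow> 'r" where
  "ev_req (Issue r) = r"
| "ev_req (Recv r w u) = r"

fun ev_node :: "('r \<Rightarrow> 'v) \<Rightarrow> ('r, 'v) event \<Rightarrow> 'v" where
  "ev_node nd (Issue r) = nd r"
| "ev_node nd (Recv r w u) = u"

lemma visits_iff: "visits nd e r x \<longleftrightarrow> ev_req e = r \<and> ev_node nd e = x"
  by (cases e) auto

lemma step_frame:
  assumes "step wt nd tm s (e, t) = Some s'"
  shows "ev_req e \<noteq> r \<Longrightarrow> prd s' r = prd s r \<and> msgs s' r = msgs s r"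
    and "ev_node nd e \<noteq> x \<Longrightarrow> lnk s' x = lnk s x \<and> lst s' x = lst s x"
  using assms by (cases rule: step_SomeE; auto)+

locale arrow_execution =
  fixes V :: "'v set" and E :: "'v \<Rightarrow> 'v \<Rightarrow> bool" and wt :: "'v \<Rightarrow> 'v \<Rightarrow> real"
    and v0 :: 'v and l :: "'v \<Rightarrow> 'v"
    and R :: "'r set" and r0 :: 'r and nd :: "'r \<Rightarrow> 'v" and tm :: "'r \<Rightarrow> real"
    and tr :: "(('r, 'v) event \<times> real) list" and sf :: "('v, 'r) st"
  assumes exec: "arrow_exec V E wt v0 l R r0 nd tm tr sf"
begin

lemma tree: "is_tree V E"
  and links: "init_links V E v0 l"
  and finite_R: "finite R" and r0_in_R: "r0 \<in> R" and nd_r0: "nd r0 = v0"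
  and nd_in_V: "r \<in> R \<Longrightarrow> nd r \<in> V"
  and run_tr: "run wt nd tm (init_state l v0 r0) tr = Some sf"
  and msgs_final: "msgs sf r = None"
  and issue_in_R: "x \<in> set tr \<Longrightarrow> fst x = Issue r \<Longrightarrow> r \<in> R - {r0}"
  and issue_count: "r \<in> R - {r0} \<Longrightarrow> card {k. k < length tr \<and> fst (tr ! k) = Issue r} = 1"
  using exec unfolding arrow_exec_def by (auto simp: image_iff)

lemma edge: "E x y \<Longrightarrow> x \<in> V \<and> y \<in> V \<and> x \<noteq> y \<and> E y x"
  using tree_edge[OF tree] .

abbreviation evt :: "nat \<Rightarrow> ('r, 'v) event" where
  "evt q \<equiv> fst (tr ! q)"

lemma issued_request: "q < length tr \<Longrightarrow> evt q = Issue r \<Longrightarrow> r \<in> R - {r0}"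
  using issue_in_R nth_mem by blast

lemma issue_index:
  assumes "g \<in> R - {r0}"
  obtains q where "q < length tr" "evt q = Issue g"
    "\<And>q'. q' < length tr \<Longrightarrow> evt q' = Issue g \<Longrightarrow> q' = q"
proof -
  obtain z where z: "{k. k < length tr \<and> evt k = Issue g} = {z}"
    using issue_count[OF assms] by (rule card_1_singletonE)
  have "k < length tr \<and> evt k = Issue g \<longleftrightarrow> k = z" for k
    using z by (metis (lifting) mem_Collect_eq singleton_iff)
  then show thesis using that by blast
qed

lemma issue_unique:
  assumes "q < length tr" "evt q = Issue r" "q' < length tr" "evt q' = Issue r"
  shows "q = q'"
proof -
  obtain z where "\<And>k. k < length tr \<Longrightarrow> evt k = Issue r \<Longrightarrow> k = z"
    using issue_index[OF issued_request[OF assms(1,2)]] by blast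
  with assms show ?thesis by metis
qed

definition state :: "nat \<Rightarrow> ('v, 'r) st" where
  "state n = the (run wt nd tm (init_state l v0 r0) (take n tr))"

lemma run_take_state: "run wt nd tm (init_state l v0 r0) (take n tr) = Some (state n)"
proof -
  have "run wt nd tm (init_state l v0 r0) (take n tr @ drop n tr) = Some sf" using run_tr by simp
  then show ?thesis unfolding state_def run_append by (auto split: option.splits)
qed

lemma state_0: "state 0 = init_state l v0 r0"
  using run_take_state[of 0] by simp

lemma state_length: "state (length tr) = sf"
  using run_take_state[of "length tr"] run_tr by simp

lemma state_Suc:
  "n < length tr \<Longrightarrow> step wt nd tm (state n) (evt n, snd (tr ! n)) = Some (state (Suc n))"
  using run_take_state[of "Suc n"]
  by (simp add: take_Suc_conv_app_nth run_append run_take_state split: option.splits)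

text \<open>The second conjunct makes routes non-backtracking: the receiver of a message never links back
  to its sender.\<close>
definition consistent :: "('v, 'r) st \<Rightarrow> bool" where
  "consistent s \<longleftrightarrow>
     (\<forall>x\<in>V. lnk s x \<noteq> x \<longrightarrow> E x (lnk s x) \<and> lnk s (lnk s x) \<noteq> x) \<and>
     (\<forall>r a y t. msgs s r = Some (a, y, t) \<longrightarrow> E a y \<and> lnk s y \<noteq> a \<and> lnk s a \<noteq> y) \<and>
     (\<forall>r r' a y t b z t'. msgs s r = Some (a, y, t) \<longrightarrow> msgs s r' = Some (b, z, t') \<longrightarrow>
        r \<noteq> r' \<longrightarrow> (b, z) \<noteq> (a, y) \<and> (b, z) \<noteq> (y, a)) \<and>
     (\<forall>x g. lst s x = Some g \<longrightarrow> nd g = x)"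

lemma consistentI:
  assumes "\<And>x. x \<in> V \<Longrightarrow> lnk s x \<noteq> x \<Longrightarrow> E x (lnk s x) \<and> lnk s (lnk s x) \<noteq> x"
    and "\<And>r a y t. msgs s r = Some (a, y, t) \<Longrightarrow> E a y \<and> lnk s y \<noteq> a \<and> lnk s a \<noteq> y"
    and "\<And>r r' a y t b z t'. msgs s r = Some (a, y, t) \<Longrightarrow> msgs s r' = Some (b, z, t') \<Longrightarrow>
           r \<noteq> r' \<Longrightarrow> (b, z) \<noteq> (a, y) \<and> (b, z) \<noteq> (y, a)"
    and "\<And>x g. lst s x = Some g \<Longrightarrow> nd g = x"
  shows "consistent s"
  using assms unfolding consistent_def by blast

lemma consistentD:
  assumes "consistent s"
  shows "x \<in> V \<Longrightarrow> lnk s x \<noteq> x \<Longrightarrow> E x (lnk s x) \<and> lnk s (lnk s x) \<noteq> x"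
    and "msgs s r = Some (a, y, t) \<Longrightarrow> E a y \<and> lnk s y \<noteq> a \<and> lnk s a \<noteq> y"
    and "msgs s r = Some (a, y, t) \<Longrightarrow> msgs s r' = Some (b, z, t') \<Longrightarrow> r \<noteq> r' \<Longrightarrow>
           (b, z) \<noteq> (a, y) \<and> (b, z) \<noteq> (y, a)"
    and "lst s x = Some g \<Longrightarrow> nd g = x"
  using assms unfolding consistent_def by blast+

lemma consistent_init: "consistent (init_state l v0 r0)"
  using init_links_edge[OF tree links] links nd_r0
  unfolding consistent_def init_state_def init_links_def by auto

lemma consistent_receive:
  assumes cons: "consistent s" and mg: "msgs s g = Some (w, u, t0)"
  shows "x \<in> V \<Longrightarrow> ((lnk s)(u := w)) x \<noteq> x \<Longrightarrow>
           E x (((lnk s)(u := w)) x) \<and> ((lnk s)(u := w)) (((lnk s)(u := w)) x) \<noteq> x"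
    and "msgs s r = Some (a, y, t) \<Longrightarrow> r \<noteq> g \<Longrightarrow>
           E a y \<and> ((lnk s)(u := w)) y \<noteq> a \<and> ((lnk s)(u := w)) a \<noteq> y"
proof -
  have wu: "E w u" "lnk s w \<noteq> u" "u \<noteq> w" using consistentD(2)[OF cons mg] edge by auto
  show "E x (((lnk s)(u := w)) x) \<and> ((lnk s)(u := w)) (((lnk s)(u := w)) x) \<noteq> x"
    if "x \<in> V" "((lnk s)(u := w)) x \<noteq> x"
  proof (cases "x = u")
    case False
    then show ?thesis using that consistentD(1)[OF cons, of x] wu by auto
  qed (use wu edge in auto)
  show "E a y \<and> ((lnk s)(u := w)) y \<noteq> a \<and> ((lnk s)(u := w)) a \<noteq> y"
    if "msgs s r = Some (a, y, t)" "r \<noteq> g"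
    using that consistentD(2)[OF cons that(1)] consistentD(3)[OF cons mg that(1)] by auto
qed

lemma consistent_step:
  assumes cons: "consistent s" and st: "step wt nd tm s (e, t) = Some s'"
    and nd_V: "\<And>g. e = Issue g \<Longrightarrow> nd g \<in> V"
  shows "consistent s'"
  using st
proof (cases rule: step_SomeE)
  case (issue_sink g)
  then show ?thesis using cons unfolding consistent_def by auto
next
  case (issue_send g)
  let ?v = "nd g" and ?y = "lnk s (nd g)"
  have vy: "E ?v ?y" "lnk s ?y \<noteq> ?v" "?v \<noteq> ?y"
    using consistentD(1)[OF cons nd_V] issue_send(1,2) by auto
  show ?thesis
  proof (rule consistentI)
    fix x assume "x \<in> V" "lnk s' x \<noteq> x"
    then show "E x (lnk s' x) \<and> lnk s' (lnk s' x) \<noteq> x"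
      using consistentD(1)[OF cons, of x] issue_send(3) by auto
  next
    fix r a y t' assume m: "msgs s' r = Some (a, y, t')"
    show "E a y \<and> lnk s' y \<noteq> a \<and> lnk s' a \<noteq> y"
    proof (cases "r = g")
      case False
      then have "E a y \<and> lnk s y \<noteq> a \<and> lnk s a \<noteq> y"
        using m issue_send(3) consistentD(2)[OF cons, of r a y t'] by simp
      then show ?thesis using edge[of a y] issue_send(3) by auto
    qed (use m vy issue_send(3) in auto)
  next
    fix r r' a y t1 b z t2
    assume "msgs s' r = Some (a, y, t1)" "msgs s' r' = Some (b, z, t2)" "r \<noteq> r'"
    then show "(b, z) \<noteq> (a, y) \<and> (b, z) \<noteq> (y, a)"
      using consistentD(2,3)[OF cons] issue_send(3) by (auto split: if_splits)
  next
    fix x g' assume "lst s' x = Some g'"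
    then show "nd g' = x" using consistentD(4)[OF cons] issue_send(3) by (auto split: if_splits)
  qed
next
  case (recv_sink g w u t0)
  show ?thesis
  proof (rule consistentI)
    fix r a y t' assume "msgs s' r = Some (a, y, t')"
    then have "msgs s r = Some (a, y, t')" "r \<noteq> g" using recv_sink(4) by (auto split: if_splits)
    then show "E a y \<and> lnk s' y \<noteq> a \<and> lnk s' a \<noteq> y"
      using consistent_receive(2)[OF cons recv_sink(2)] recv_sink(4) by simp
  next
    fix r r' a y t1 b z t2
    assume "msgs s' r = Some (a, y, t1)" "msgs s' r' = Some (b, z, t2)" "r \<noteq> r'"
    then show "(b, z) \<noteq> (a, y) \<and> (b, z) \<noteq> (y, a)"
      using consistentD(3)[OF cons] recv_sink(4) by (auto split: if_splits)
  qed (use consistent_receive(1)[OF cons recv_sink(2)] consistentD(4)[OF cons] recv_sink(4) in auto)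
next
  case (recv_forward g w u t0)
  let ?x = "lnk s u"
  have ux: "E u ?x" "lnk s ?x \<noteq> u" "u \<noteq> ?x" "?x \<noteq> w"
    using consistentD(1)[OF cons, of u] consistentD(2)[OF cons recv_forward(2)] recv_forward(3) edge
    by auto
  show ?thesis
  proof (rule consistentI)
    fix r a y t' assume m: "msgs s' r = Some (a, y, t')"
    show "E a y \<and> lnk s' y \<noteq> a \<and> lnk s' a \<noteq> y"
    proof (cases "r = g")
      case False
      then show ?thesis
        using m consistent_receive(2)[OF cons recv_forward(2), of r a y t'] recv_forward(4) by auto
    qed (use m ux recv_forward(4) in auto)
  next
    fix r r' a y t1 b z t2
    assume "msgs s' r = Some (a, y, t1)" "msgs s' r' = Some (b, z, t2)" "r \<noteq> r'"
    then show "(b, z) \<noteq> (a, y) \<and> (b, z) \<noteq> (y, a)"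
      using consistentD(2,3)[OF cons] recv_forward(4) by (auto split: if_splits)
  qed (use consistent_receive(1)[OF cons recv_forward(2)] consistentD(4)[OF cons] recv_forward(4) in auto)
qed

lemma consistent_state: "n \<le> length tr \<Longrightarrow> consistent (state n)"
proof (induction n)
  case 0
  then show ?case using consistent_init state_0 by simp
next
  case (Suc n)
  then have n: "n < length tr" by simp
  have "nd g \<in> V" if "evt n = Issue g" for g
    using issued_request[OF n that] nd_in_V by blast
  with consistent_step[OF Suc.IH state_Suc[OF n]] n show ?case by simp
qed

lemma in_flight_edge: "n \<le> length tr \<Longrightarrow> msgs (state n) r = Some (a, y, t) \<Longrightarrow> E a y"
  using consistentD(2)[OF consistent_state] by blast

lemma recv_in_flight:
  assumes "m < length tr" "evt m = Recv g w u"
  obtains t where "msgs (state m) g = Some (w, u, t)"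
  using state_Suc[OF assms(1)] by (cases rule: step_SomeE) (use assms(2) that in auto)

lemma event_node_in_V:
  assumes m: "m < length tr"
  shows "ev_node nd (evt m) \<in> V"
proof (cases "evt m")
  case (Recv g w u)
  then obtain t where "msgs (state m) g = Some (w, u, t)" using recv_in_flight m by blast
  then show ?thesis using in_flight_edge[of m] m edge Recv by fastforce
qed (use issued_request[OF m] nd_in_V in auto)

text \<open>The dummy request r0 counts as the visitor of every node before the first event.\<close>
primrec last_visitor :: "nat \<Rightarrow> 'v \<Rightarrow> 'r" where
  "last_visitor 0 x = r0"
| "last_visitor (Suc n) x =
     (if n < length tr \<and> ev_node nd (evt n) = x then ev_req (evt n) else last_visitor n x)"

lemma sink_lst_last_visitor:
  "n \<le> length tr \<Longrightarrow> x \<in> V \<Longrightarrow> lnk (state n) x = x \<Longrightarrow> lst (state n) x = Some (last_visitor n x)"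
proof (induction n)
  case 0
  then have "x = v0" using init_links_edge[OF tree links, of x] edge state_0
    by (auto simp: init_state_def)
  then show ?case using state_0 by (simp add: init_state_def)
next
  case (Suc n)
  then have n: "n < length tr" by simp
  note st = state_Suc[OF n]
  show ?case
  proof (cases "ev_node nd (evt n) = x")
    case False
    then show ?thesis using step_frame(2)[OF st] Suc by simp
  next
    case True
    from st show ?thesis
    proof (cases rule: step_SomeE)
      case (recv_sink g w u t0)
      then have "w \<noteq> u" using in_flight_edge[of n] n edge by fastforce
      then show ?thesis using recv_sink True Suc.prems by simp
    next
      case (recv_forward g w u t0)
      then have "w \<noteq> u" using in_flight_edge[of n] n edge by fastforce
      then show ?thesis using recv_forward True Suc.prems by simp
    qed (use True n in auto)
  qed
qed

lemma msgs_issued: "n \<le> length tr \<Longrightarrow> msgs (state n) r \<noteq> None \<Longrightarrow> \<exists>q<n. evt q = Issue r"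
proof (induction n)
  case 0
  then show ?case using state_0 by (simp add: init_state_def)
next
  case (Suc n)
  then have n: "n < length tr" by simp
  from state_Suc[OF n] show ?case
  proof (cases rule: step_SomeE)
    case (issue_send g)
    then show ?thesis using Suc by (cases "g = r") (auto intro: less_SucI)
  qed (use Suc in \<open>auto split: if_splits intro: less_SucI\<close>)
qed

lemma event_after_issue:
  assumes m: "m < length tr"
  obtains q where "q \<le> m" "evt q = Issue (ev_req (evt m))"
proof (cases "evt m")
  case (Recv g w u)
  then obtain t where "msgs (state m) g = Some (w, u, t)" using recv_in_flight m by blast
  then obtain q where "q < m" "evt q = Issue g" using msgs_issued[of m g] m by auto
  then show ?thesis using that[of q] Recv by simp
qed (use that in auto)

lemma event_request_in_R:
  assumes m: "m < length tr"
  shows "ev_req (evt m) \<in> R - {r0}"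
proof -
  obtain q where "q \<le> m" "evt q = Issue (ev_req (evt m))" using event_after_issue[OF m] .
  then show ?thesis using issued_request[of q] m by simp
qed

lemma msgs_unchanged:
  assumes "n \<le> m" "m \<le> length tr" "\<And>q. n \<le> q \<Longrightarrow> q < m \<Longrightarrow> ev_req (evt q) \<noteq> r"
  shows "msgs (state m) r = msgs (state n) r"
  using assms
proof (induction m rule: dec_induct)
  case (step q)
  then show ?case using step_frame(1)[OF state_Suc, of q r] by simp
qed simp

lemma finished_request_stable:
  assumes "n \<le> m" "m \<le> length tr" "msgs (state n) r = None" "q < n" "evt q = Issue r"
  shows "msgs (state m) r = None \<and> prd (state m) r = prd (state n) r"
  using assms(1,2)
proof (induction m rule: dec_induct)
  case (step n')
  then have n': "n' < length tr" by simp
  have no_reissue: "evt n' \<noteq> Issue r"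
    using issue_unique[OF n' _ _ assms(5)] assms(1,2,4) step(1,2) by force
  from state_Suc[OF n'] show ?case
    by (cases rule: step_SomeE) (use step no_reissue in auto)
qed (use assms(3) in simp)

lemma arrival:
  assumes n: "n \<le> length tr" and msg: "msgs (state n) r = Some (a, y, t)"
  obtains m where "n \<le> m" "m < length tr" "evt m = Recv r a y" "msgs (state m) r = Some (a, y, t)"
proof -
  have "\<exists>m. n \<le> m \<and> m < length tr \<and> ev_req (evt m) = r"
  proof (rule ccontr)
    assume "\<not> ?thesis"
    then have "msgs (state (length tr)) r = msgs (state n) r" using msgs_unchanged[OF n] by auto
    then show False using msg state_length msgs_final by simp
  qed
  then obtain m where m: "n \<le> m" "m < length tr" "ev_req (evt m) = r"
    and least: "\<And>q. q < m \<Longrightarrow> \<not> (n \<le> q \<and> q < length tr \<and> ev_req (evt q) = r)"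
    unfolding exists_least_iff[of "\<lambda>m. n \<le> m \<and> m < length tr \<and> ev_req (evt m) = r"] by blast
  have first: "ev_req (evt q) \<noteq> r" if "n \<le> q" "q < m" for q
    using least[OF that(2)] that m(2) by simp
  have msg_m: "msgs (state m) r = Some (a, y, t)"
    using msgs_unchanged[OF m(1) _ first] m(2) msg by simp
  obtain q where q: "q < n" "evt q = Issue r" using msgs_issued[OF n] msg by blast
  then have "evt m \<noteq> Issue r" using issue_unique[OF m(2) _ _ q(2)] m(1) n by force
  with state_Suc[OF m(2)] m(3) msg_m have "evt m = Recv r a y"
    by (cases rule: step_SomeE) auto
  then show ?thesis using that m msg_m by blast
qed

lemma request_event:
  assumes m: "m < length tr" and g: "ev_req (evt m) = g" and x: "ev_node nd (evt m) = x"
  shows "lnk (state m) x = x \<Longrightarrow> prd sf g = lst (state m) x"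
    and "lnk (state m) x \<noteq> x \<Longrightarrow> msgs (state (Suc m)) g = Some (x, lnk (state m) x, snd (tr ! m))"
proof -
  have handled: "prd sf g = lst (state m) x"
    if "msgs (state (Suc m)) g = None" "prd (state (Suc m)) g = lst (state m) x" "q \<le> m" "evt q = Issue g" for q
    using finished_request_stable[OF _ _ that(1), of "length tr" q] that m state_length by simp
  have fresh: "msgs (state m) g = None" if "evt m = Issue g"
  proof (rule ccontr)
    assume "msgs (state m) g \<noteq> None"
    then obtain q where "q < m" "evt q = Issue g" using msgs_issued[of m g] m by auto
    then show False using issue_unique[OF m that, of q] m by simp
  qed
  obtain q where q: "q \<le> m" "evt q = Issue g" using event_after_issue[OF m] g by blast
  show "prd sf g = lst (state m) x" if sink: "lnk (state m) x = x"
    using state_Suc[OF m]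
  proof (cases rule: step_SomeE)
    case (issue_sink g')
    then show ?thesis using handled[OF _ _ q] fresh g x by simp
  next
    case (recv_sink g' w u t0)
    then show ?thesis using handled[OF _ _ q] g x by simp
  qed (use sink g x in auto)
  show "msgs (state (Suc m)) g = Some (x, lnk (state m) x, snd (tr ! m))" if "lnk (state m) x \<noteq> x"
    using state_Suc[OF m] by (cases rule: step_SomeE) (use that g x in auto)
qed

definition visited :: "'r \<Rightarrow> 'v \<Rightarrow> bool" where
  "visited g y \<longleftrightarrow> (\<exists>q<length tr. visits nd (evt q) g y)"

text \<open>The disjunct about hd ws records the next hop; the induction needs it to exclude backtracking.\<close>
lemma route_from_event:
  assumes "m < length tr" "ev_req (evt m) = g" "ev_node nd (evt m) = x"
  shows "\<exists>ws l'. prd sf g = Some l' \<and> last (x # ws) = nd l' \<and>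
           successively E (x # ws) \<and> no_backtrack (x # ws) \<and> (ws = [] \<or> hd ws = lnk (state m) x) \<and>
           (\<forall>y\<in>set (x # ws). visited g y)"
  using assms
proof (induction "length tr - m" arbitrary: m x rule: less_induct)
  case less
  have x_V: "x \<in> V" using event_node_in_V[OF less.prems(1)] less.prems(3) by simp
  have vis: "visited g x" using less.prems unfolding visited_def by (auto simp: visits_iff)
  show ?case
  proof (cases "lnk (state m) x = x")
    case True
    have lst: "lst (state m) x = Some (last_visitor m x)"
      using sink_lst_last_visitor[OF _ x_V True] less.prems(1) by simp
    then have "prd sf g = Some (last_visitor m x)" using request_event(1)[OF less.prems True] by simp
    moreover have "nd (last_visitor m x) = x"
      using consistentD(4)[OF consistent_state lst] less.prems(1) by simp
    ultimately show ?thesis using vis by (intro exI[of _ "[]"]) auto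
  next
    case False
    let ?z = "lnk (state m) x"
    have "E x ?z" using consistentD(1)[OF consistent_state x_V] False less.prems(1) by simp
    have "msgs (state (Suc m)) g = Some (x, ?z, snd (tr ! m))"
      using request_event(2)[OF less.prems False] .
    then obtain m' where m': "Suc m \<le> m'" "m' < length tr" "evt m' = Recv g x ?z"
      "msgs (state m') g = Some (x, ?z, snd (tr ! m))"
      using arrival less.prems(1) by (metis Suc_leI)
    then have no_return: "lnk (state m') ?z \<noteq> x" using consistentD(2)[OF consistent_state] by simp
    obtain ws l' where ws: "prd sf g = Some l'" "last (?z # ws) = nd l'"
      "successively E (?z # ws)" "no_backtrack (?z # ws)" "ws = [] \<or> hd ws = lnk (state m') ?z"
      "\<forall>y\<in>set (?z # ws). visited g y"
      using less.hyps[of m' ?z] m' by fastforce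
    have "no_backtrack (x # ?z # ws)" using ws(4,5) no_return by (cases ws) auto
    then show ?thesis using ws \<open>E x ?z\<close> vis by (intro exI[of _ "?z # ws"]) auto
  qed
qed

lemma visits_path_to_predecessor:
  assumes g: "g \<in> R - {r0}" and prd: "prd sf g = Some l'"
    and p: "spath V E p (nd g) (nd l')" and y: "y \<in> set p"
  shows "visited g y"
proof -
  obtain q where q: "q < length tr" "evt q = Issue g" using issue_index[OF g] by blast
  then obtain ws l'' where ws: "prd sf g = Some l''" "last (nd g # ws) = nd l''"
    "successively E (nd g # ws)" "no_backtrack (nd g # ws)" "\<forall>y\<in>set (nd g # ws). visited g y"
    using route_from_event[of q g "nd g"] by (auto simp del: last.simps)
  have "spath V E (nd g # ws) (nd g) (nd l')"
    using tree_no_backtrack_walk_spath[OF tree ws(3,4)] ws(1,2) prd nd_in_V g by simp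
  then have "p = nd g # ws" using tree_spath_unique[OF tree p] by simp
  then show ?thesis using ws(5) y by auto
qed

end

section \<open>Visitors of a node arrive in queue order\<close>

locale arrow_queue = arrow_execution V E wt v0 l R r0 nd tm tr sf
  for V :: "'v set" and E :: "'v \<Rightarrow> 'v \<Rightarrow> bool" and wt :: "'v \<Rightarrow> 'v \<Rightarrow> real"
    and v0 :: 'v and l :: "'v \<Rightarrow> 'v"
    and R :: "'r set" and r0 :: 'r and nd :: "'r \<Rightarrow> 'v" and tm :: "'r \<Rightarrow> real"
    and tr :: "(('r, 'v) event \<times> real) list" and sf :: "('v, 'r) st" +
  fixes rs :: "nat \<Rightarrow> 'r"
  assumes rs_bij: "bij_betw rs {0..<card R} R" and rs_0: "rs 0 = r0"
    and rs_prd: "\<forall>j\<in>{1..<card R}. prd sf (rs j) = Some (rs (j - 1))"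
begin

definition qpos :: "'r \<Rightarrow> nat" where
  "qpos r = inv_into {0..<card R} rs r"

lemma qpos_rs: "j < card R \<Longrightarrow> qpos (rs j) = j"
  unfolding qpos_def using rs_bij bij_betw_inv_into_left by fastforce

lemma qpos_r0: "qpos r0 = 0"
proof -
  have "card R > 0" using finite_R r0_in_R card_gt_0_iff by blast
  then show ?thesis using qpos_rs[of 0] rs_0 by simp
qed

lemma qpos_prd:
  assumes r: "r \<in> R - {r0}" and prd: "prd sf r = Some l'"
  shows "Suc (qpos l') = qpos r"
proof -
  obtain j where j: "j < card R" "r = rs j"
    using r rs_bij unfolding bij_betw_def by (metis DiffD1 atLeastLessThan_iff imageE)
  with r rs_0 have "j \<noteq> 0" by (metis DiffD2 singletonI)
  with j prd rs_prd have "l' = rs (j - 1)" by simp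
  with j \<open>j \<noteq> 0\<close> show ?thesis using qpos_rs by simp
qed

definition after_last_visitor :: "nat \<Rightarrow> bool" where
  "after_last_visitor q \<longleftrightarrow> qpos (last_visitor q (ev_node nd (evt q))) < qpos (ev_req (evt q))"

end

locale arrow_queue_prefix = arrow_queue V E wt v0 l R r0 nd tm tr sf rs
  for V :: "'v set" and E :: "'v \<Rightarrow> 'v \<Rightarrow> bool" and wt :: "'v \<Rightarrow> 'v \<Rightarrow> real"
    and v0 :: 'v and l :: "'v \<Rightarrow> 'v"
    and R :: "'r set" and r0 :: 'r and nd :: "'r \<Rightarrow> 'v" and tm :: "'r \<Rightarrow> real"
    and tr :: "(('r, 'v) event \<times> real) list" and sf :: "('v, 'r) st" and rs :: "nat \<Rightarrow> 'r" +
  fixes c :: nat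
  assumes prefix_after_last_visitor:
    "\<And>q. q < length tr \<Longrightarrow> qpos (ev_req (evt q)) < c \<Longrightarrow> after_last_visitor q"
begin

text \<open>Capping at c makes the potential monotone in time: by the hypothesis of the locale, visits of
  requests below c move the last visitor later in the queue, and all other visits set it to c.\<close>
definition potential :: "nat \<Rightarrow> 'v \<Rightarrow> nat" where
  "potential n x = min (qpos (last_visitor n x)) c"

lemma potential_Suc:
  "n < length tr \<Longrightarrow> potential (Suc n) x =
     (if ev_node nd (evt n) = x then min (qpos (ev_req (evt n))) c else potential n x)"
  unfolding potential_def by simp

lemma potential_Suc_mono: "potential n x \<le> potential (Suc n) x"
proof (cases "n < length tr \<and> ev_node nd (evt n) = x")
  case True
  then have "qpos (ev_req (evt n)) < c \<Longrightarrow> qpos (last_visitor n x) < qpos (ev_req (evt n))"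
    using prefix_after_last_visitor unfolding after_last_visitor_def by blast
  moreover have "potential (Suc n) x = min (qpos (ev_req (evt n))) c" using True potential_Suc by simp
  ultimately show ?thesis unfolding potential_def by linarith
qed (auto simp: potential_def)

lemma potential_mono: "n \<le> n' \<Longrightarrow> potential n x \<le> potential n' x"
  by (induction n' rule: dec_induct) (use potential_Suc_mono le_trans in blast)+

definition potential_inv :: "nat \<Rightarrow> bool" where
  "potential_inv n \<longleftrightarrow>
     (\<forall>x\<in>V. lnk (state n) x \<noteq> x \<longrightarrow> potential n x \<le> potential n (lnk (state n) x)) \<and>
     (\<forall>r a y t. msgs (state n) r = Some (a, y, t) \<longrightarrow> min (qpos r) c \<le> potential n a)"

lemma potential_inv_state: "n \<le> length tr \<Longrightarrow> potential_inv n"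
proof (induction n)
  case 0
  then show ?case using state_0 qpos_r0 by (simp add: potential_inv_def potential_def init_state_def)
next
  case (Suc n)
  then have n: "n < length tr" by simp
  let ?u = "ev_node nd (evt n)" and ?g = "ev_req (evt n)"
  have links: "\<forall>x\<in>V. lnk (state n) x \<noteq> x \<longrightarrow> potential n x \<le> potential n (lnk (state n) x)"
    and msgs: "\<And>r a y t. msgs (state n) r = Some (a, y, t) \<Longrightarrow> min (qpos r) c \<le> potential n a"
    using Suc n unfolding potential_inv_def by auto
  have old_links: "potential (Suc n) x \<le> potential (Suc n) (lnk (state n) x)"
    if "x \<in> V" "lnk (state n) x \<noteq> x" "x \<noteq> ?u" for x
    using links that potential_Suc[OF n, of x] potential_Suc_mono[of n "lnk (state n) x"] by auto
  have old_msgs: "min (qpos r) c \<le> potential (Suc n) a" if "msgs (state n) r = Some (a, y, t)" for r a y t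
    using msgs[OF that] potential_Suc_mono[of n a] by linarith
  have new_at_u: "potential (Suc n) ?u = min (qpos ?g) c" using potential_Suc[OF n] by simp
  from state_Suc[OF n] show ?case
  proof (cases rule: step_SomeE)
    case (issue_sink g)
    then show ?thesis using old_links old_msgs unfolding potential_inv_def by auto
  next
    case (issue_send g)
    then show ?thesis using old_links old_msgs new_at_u unfolding potential_inv_def by auto
  next
    case (recv_sink g w u t0)
    have "w \<noteq> u" using in_flight_edge[OF _ recv_sink(2)] n edge by auto
    then have "potential (Suc n) u \<le> potential (Suc n) w"
      using msgs[OF recv_sink(2)] new_at_u potential_Suc[OF n, of w] recv_sink(1) by simp
    then show ?thesis using old_links old_msgs recv_sink unfolding potential_inv_def by auto
  next
    case (recv_forward g w u t0)
    have "w \<noteq> u" using in_flight_edge[OF _ recv_forward(2)] n edge by auto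
    then have "potential (Suc n) u \<le> potential (Suc n) w"
      using msgs[OF recv_forward(2)] new_at_u potential_Suc[OF n, of w] recv_forward(1) by simp
    then show ?thesis using old_links old_msgs new_at_u recv_forward unfolding potential_inv_def by auto
  qed
qed

lemma potential_below_at_event:
  assumes "m < length tr" "qpos (ev_req (evt m)) = c"
  shows "potential m (ev_node nd (evt m)) < c"
  using assms
proof (induction "length tr - m" arbitrary: m rule: less_induct)
  case less
  let ?g = "ev_req (evt m)" and ?x = "ev_node nd (evt m)"
  have x_V: "?x \<in> V" using event_node_in_V[OF less.prems(1)] .
  show ?case
  proof (cases "lnk (state m) ?x = ?x")
    case True
    then have "prd sf ?g = Some (last_visitor m ?x)"
      using request_event(1)[OF less.prems(1) refl refl] sink_lst_last_visitor[OF _ x_V] less.prems(1)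
      by simp
    then have "Suc (qpos (last_visitor m ?x)) = c"
      using qpos_prd event_request_in_R[OF less.prems(1)] less.prems(2) by simp
    then show ?thesis unfolding potential_def by simp
  next
    case False
    let ?z = "lnk (state m) ?x"
    have "msgs (state (Suc m)) ?g = Some (?x, ?z, snd (tr ! m))"
      using request_event(2)[OF less.prems(1) refl refl False] .
    then obtain m' where m': "Suc m \<le> m'" "m' < length tr" "evt m' = Recv ?g ?x ?z"
      using arrival less.prems(1) by (metis Suc_leI)
    then have "potential m' ?z < c" using less.hyps[of m'] less.prems(2) by fastforce
    moreover have "potential m ?z \<le> potential m' ?z"
      using potential_mono[of "Suc m" m' ?z] potential_Suc[OF less.prems(1), of ?z] False m'(1) by simp
    moreover have "potential m ?x \<le> potential m ?z"
      using potential_inv_state[of m] less.prems(1) x_V False unfolding potential_inv_def by simp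
    ultimately show ?thesis by linarith
  qed
qed

end

context arrow_queue
begin

lemma after_last_visitor_below: "q < length tr \<Longrightarrow> qpos (ev_req (evt q)) < c \<Longrightarrow> after_last_visitor q"
proof (induction c arbitrary: q)
  case (Suc c)
  interpret arrow_queue_prefix V E wt v0 l R r0 nd tm tr sf rs c
    by unfold_locales (use Suc.IH in blast)
  show ?case
  proof (cases "qpos (ev_req (evt q)) < c")
    case False
    then have "potential q (ev_node nd (evt q)) < c"
      using potential_below_at_event Suc.prems by simp
    then show ?thesis using False Suc.prems unfolding after_last_visitor_def potential_def by simp
  qed (use Suc in blast)
qed simp

lemma after_last_visitor: "q < length tr \<Longrightarrow> after_last_visitor q"
  using after_last_visitor_below[of q "Suc (qpos (ev_req (evt q)))"] by simp

lemma last_visitor_mono: "n \<le> n' \<Longrightarrow> qpos (last_visitor n x) \<le> qpos (last_visitor n' x)"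
proof (induction n' rule: dec_induct)
  case (step m)
  then show ?case using after_last_visitor[of m] unfolding after_last_visitor_def by auto
qed simp

lemma visits_in_queue_order:
  assumes "q' < q" "q < length tr" "visits nd (evt q') r' x" "visits nd (evt q) r x"
  shows "qpos r' < qpos r"
proof -
  have "qpos r' = qpos (last_visitor (Suc q') x)" using assms by (simp add: visits_iff)
  also have "\<dots> \<le> qpos (last_visitor q x)" using last_visitor_mono assms(1) Suc_leI by blast
  also have "\<dots> < qpos r" using after_last_visitor[OF assms(2)] assms(4)
    unfolding after_last_visitor_def by (simp add: visits_iff)
  finally show ?thesis .
qed

end

theorem lemma12:
  fixes V :: "'v set" and E :: "'v \<Rightarrow> 'v \<Rightarrow> bool" and wt :: "'v \<Rightarrow> 'v \<Rightarrow> real"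
    and v0 :: 'v and l :: "'v \<Rightarrow> 'v"
    and R :: "'r set" and r0 :: 'r and nd :: "'r \<Rightarrow> 'v" and tm :: "'r \<Rightarrow> real"
    and tr :: "(('r, 'v) event \<times> real) list" and sf :: "('v, 'r) st"
    and rs :: "nat \<Rightarrow> 'r" and i :: nat and p :: "'v list" and k :: nat
  assumes exec: "arrow_exec V E wt v0 l R r0 nd tm tr sf"
    and order: "bij_betw rs {0..<card R} R" "rs 0 = r0"
      "\<forall>j\<in>{1..<card R}. prd sf (rs j) = Some (rs (j - 1))"
    and i: "1 \<le> i" "i < card R"
    and path: "spath V E p (nd (rs i)) (nd (rs (i - 1)))"
    and k: "k < length p"
  shows "\<exists>q < length tr. visits nd (fst (tr ! q)) (rs i) (p ! k) \<and>
           (\<forall>j q'. i < j \<and> j < card R \<and> q' < length tr \<and>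
                   visits nd (fst (tr ! q')) (rs j) (p ! k) \<longrightarrow> q < q')"
proof -
  interpret arrow_queue V E wt v0 l R r0 nd tm tr sf rs
    using exec order by unfold_locales
  have "rs i \<in> R - {r0}"
    using order(1,2) i qpos_rs[of i] qpos_rs[of 0] by (auto simp: bij_betw_def)
  moreover have "prd sf (rs i) = Some (rs (i - 1))" using order(3) i by simp
  ultimately have "visited (rs i) (p ! k)"
    using visits_path_to_predecessor path k by simp
  then obtain q where q: "q < length tr" "visits nd (evt q) (rs i) (p ! k)"
    unfolding visited_def by blast
  have "q < q'" if "i < j" "j < card R" "q' < length tr" "visits nd (evt q') (rs j) (p ! k)" for j q'
  proof -
    have "q' \<noteq> q" using q(2) that(4) i(2) \<open>i < j\<close> qpos_rs[of i] qpos_rs[of j] \<open>j < card R\<close>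
      by (auto simp: visits_iff)
    moreover have "\<not> q' < q"
      using visits_in_queue_order[OF _ q(1) that(4) q(2)] qpos_rs i(2) that(1,2) by auto
    ultimately show ?thesis by simp
  qed
  with q show ?thesis by blast
qed

end
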